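(* Let $(X_i,Y_i)_{i\in[n+m]}$ be i.i.d. from a distribution $P_{XY}$ on $\mathcal X\times\mathcal Y$, where $(X_i,Y_i)_{i\in[n]}$ is the calibration sample and $(X_{n+i})_{i\in[m]}$ the test covariates. Let $C^\mu$ and $D^\mu$ be the estimated-probability rules described in the context, and assume that for every $x\in\mathcal X$ and all $0\le\mu_1<\mu_2$ we have $C^{\mu_1}(x)\subseteq C^{\mu_2}(x)$. Define $$\mu_\alpha=\min\left\{\mu\ge 0:\ \frac{\frac{1}{n+1}\left(\sum_{i=1}^n \mathbb 1\{Y_i\notin C^{\mu}(X_i)\}D^{\mu}(X_i)+1\right)}{\frac{1}{m}\left(1\vee\sum_{i=1}^m D^{\mu}(X_{n+i})\right)}\le\alpha\right\},$$ with $\mu_\alpha=\infty$ and $D^\infty\equiv 0$ if no such $\mu$ exists. Then $$\mathbb E\left[\frac{\sum_{i=1}^m \mathbb 1\{Y_{n+i}\notin C^{\mu_\alpha}(X_{n+i})\}D^{\mu_\alpha}(X_{n+i})}{1\vee\sum_{i=1}^m D^{\mu_\alpha}(X_{n+i})}\right]\le\alpha.$$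
   Context: Let $\alpha\in(0,1)$. $\mathcal I$ is a finite collection of subsets of $\mathcal Y$ (informative prediction sets) enumerated in a fixed lexicographic order, and $w:\mathcal I\to(0,B)$ is a bounded positive weight function. For each $x\in\mathcal X$ and $C\in\mathcal I$, $\hat p_C(x)\in[0,1]$ is a fixed (deterministic, e.g. obtained from independent training data) estimate of $\mathbb P(Y\in C\mid X=x)$. For $\mu\ge0$ define $\hat\ell_{x,C}(\mu)=w(C)\hat p_C(x)+\mu(\hat p_C(x)-(1-\alpha))$. $C^\mu(x)$ is a maximizer of $\hat\ell_{x,C}(\mu)$ over $C\in\mathcal I$, with ties broken in favor of the smallest weight $w(C)$ and then the smallest index in the fixed ordering; $D^\mu(x)=\mathbb 1\{\max_{C\in\mathcal I}\hat\ell_{x,C}(\mu)>0\}$. $a\vee b=\max(a,b)$. *)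

theory Defs
  imports "HOL-Probability.Probability"
begin

text \<open>The collection of informative sets is a list Is (the fixed enumeration);
  w is the weight function, p C x is the estimate of P(Y in C | X = x).\<close>

definition lhat :: "('y set \<Rightarrow> real) \<Rightarrow> ('y set \<Rightarrow> 'x \<Rightarrow> real) \<Rightarrow> real \<Rightarrow> 'x \<Rightarrow> 'y set \<Rightarrow> real \<Rightarrow> real" where
  "lhat w p alpha x C mu = w C * p C x + mu * (p C x - (1 - alpha))"

definition Cmu :: "'y set list \<Rightarrow> ('y set \<Rightarrow> real) \<Rightarrow> ('y set \<Rightarrow> 'x \<Rightarrow> real) \<Rightarrow> real \<Rightarrow> real \<Rightarrow> 'x \<Rightarrow> 'y set" where
  "Cmu Is w p alpha mu x =
     (let L = (\<lambda>k. lhat w p alpha x (Is ! k) mu);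
          Mx = Max (L ` {..<length Is});
          K = {k. k < length Is \<and> L k = Mx};
          wmin = Min ((\<lambda>k. w (Is ! k)) ` K);
          k0 = Min {k \<in> K. w (Is ! k) = wmin}
      in Is ! k0)"

definition Dmu :: "'y set list \<Rightarrow> ('y set \<Rightarrow> real) \<Rightarrow> ('y set \<Rightarrow> 'x \<Rightarrow> real) \<Rightarrow> real \<Rightarrow> real \<Rightarrow> 'x \<Rightarrow> real" where
  "Dmu Is w p alpha mu x =
     of_bool (Max ((\<lambda>C. lhat w p alpha x C mu) ` set Is) > 0)"

text \<open>Sample z : indices 0..<n are calibration, n..<n+m are test points.\<close>
definition calib_ratio ::
  "'y set list \<Rightarrow> ('y set \<Rightarrow> real) \<Rightarrow> ('y set \<Rightarrow> 'x \<Rightarrow> real) \<Rightarrow> real \<Rightarrow> nat \<Rightarrow> nat \<Rightarrow> (nat \<Rightarrow> 'x \<times> 'y) \<Rightarrow> real \<Rightarrow> real" where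
  "calib_ratio Is w p alpha n m z mu =
     ((1 / real (n + 1)) *
        ((\<Sum>i<n. of_bool (snd (z i) \<notin> Cmu Is w p alpha mu (fst (z i))) * Dmu Is w p alpha mu (fst (z i))) + 1))
     / ((1 / real m) * max 1 (\<Sum>i\<in>{n..<n+m}. Dmu Is w p alpha mu (fst (z i))))"

definition mu_set ::
  "'y set list \<Rightarrow> ('y set \<Rightarrow> real) \<Rightarrow> ('y set \<Rightarrow> 'x \<Rightarrow> real) \<Rightarrow> real \<Rightarrow> nat \<Rightarrow> nat \<Rightarrow> (nat \<Rightarrow> 'x \<times> 'y) \<Rightarrow> real set" where
  "mu_set Is w p alpha n m z = {mu. 0 \<le> mu \<and> calib_ratio Is w p alpha n m z mu \<le> alpha}"

definition fdp_at ::
  "'y set list \<Rightarrow> ('y set \<Rightarrow> real) \<Rightarrow> ('y set \<Rightarrow> 'x \<Rightarrow> real) \<Rightarrow> real \<Rightarrow> nat \<Rightarrow> nat \<Rightarrow> (nat \<Rightarrow> 'x \<times> 'y) \<Rightarrow> real \<Rightarrow> real" where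
  "fdp_at Is w p alpha n m z mu =
     (\<Sum>i\<in>{n..<n+m}. of_bool (snd (z i) \<notin> Cmu Is w p alpha mu (fst (z i))) * Dmu Is w p alpha mu (fst (z i)))
     / max 1 (\<Sum>i\<in>{n..<n+m}. Dmu Is w p alpha mu (fst (z i)))"

text \<open>FDP at mu_alpha = inf of mu_set (the paper's min); if mu_set is empty,
  mu_alpha = infinity and D = 0, so the FDP is 0.\<close>
definition fdp_mu_alpha ::
  "'y set list \<Rightarrow> ('y set \<Rightarrow> real) \<Rightarrow> ('y set \<Rightarrow> 'x \<Rightarrow> real) \<Rightarrow> real \<Rightarrow> nat \<Rightarrow> nat \<Rightarrow> (nat \<Rightarrow> 'x \<times> 'y) \<Rightarrow> real" where
  "fdp_mu_alpha Is w p alpha n m z =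
     (if mu_set Is w p alpha n m z = {} then 0
      else fdp_at Is w p alpha n m z (Inf (mu_set Is w p alpha n m z)))"

end

theory Submission
  imports Defs
begin

text \<open>
  The estimated scores lhat are affine in mu. Just to the right of a level mu, the maximisers of an
  affine family are the maximisers at mu of largest slope, and among the maximisers at mu a larger
  slope means a smaller weight, so the weight tie-break already selects from that subset. Hence
  C^mu(x) and D^mu(x) are constant on intervals [mu, mu + d): every set of admissible levels contains
  its infimum (so mu_alpha is a minimum), and infima are measurable, being determined by rational levels.

  For a test point j let mu_j be the least level satisfying the calibration inequality in which j
  is counted as a calibration point. If j is a false selection at mu_alpha, monotonicity in mu gives
  mu_j = mu_alpha, and then its contribution to the FDP is at most alpha (n + 1) / m times the share
  H_jj of j among the false selections at level mu_j in {j} and the calibration sample. As mu_j is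
  symmetric in these n + 1 points, exchangeability gives E H_ji = E H_jj for each calibration point i;
  the shares sum to at most 1, so (n + 1) E H_jj <= 1, and summing over the m test points gives alpha.
\<close>

section \<open>Sets of reals that are open to the right\<close>

lemma Inf_mem_of_eventually_at_right:
  fixes S :: "real set"
  assumes "S \<noteq> {}" "bdd_below S" "\<forall>\<^sub>F t in at_right (Inf S). t \<in> S \<longleftrightarrow> Inf S \<in> S"
  shows "Inf S \<in> S"
proof (rule ccontr)
  assume notin: "Inf S \<notin> S"
  with assms(3) obtain b where "Inf S < b" and gap: "\<And>t. Inf S < t \<Longrightarrow> t < b \<Longrightarrow> t \<notin> S"
    unfolding eventually_at_right_field by auto
  then obtain s where "s \<in> S" "s < b"
    using cInf_lessD[OF assms(1)] by blast
  moreover have "Inf S < s"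
    using cInf_lower[OF \<open>s \<in> S\<close> assms(2)] notin \<open>s \<in> S\<close> by (cases "s = Inf S") auto
  ultimately show False using gap by blast
qed

lemma ex_rat_mem_less:
  fixes S :: "real set"
  assumes "s < a" "\<forall>\<^sub>F t in at_right s. t \<in> S"
  shows "\<exists>q::rat. real_of_rat q < a \<and> real_of_rat q \<in> S"
proof -
  obtain b where "s < b" and b: "\<And>t. s < t \<Longrightarrow> t < b \<Longrightarrow> t \<in> S"
    using assms(2) unfolding eventually_at_right_field by auto
  then obtain r where "r \<in> \<rat>" "s < r" "r < min a b"
    using Rats_dense_in_real[of s "min a b"] assms(1) by auto
  then show ?thesis
    using b by (auto elim!: Rats_cases)
qed

lemma
  fixes S :: "'a \<Rightarrow> real set"
  assumes pred_mem: "\<And>q. Measurable.pred N (\<lambda>z. q \<in> S z)"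
    and bdd: "\<And>z. bdd_below (S z)"
    and right_open: "\<And>z s. s \<in> S z \<Longrightarrow> \<forall>\<^sub>F t in at_right s. t \<in> S z"
  shows pred_empty_if_right_open: "Measurable.pred N (\<lambda>z. S z = {})"
    and borel_measurable_Inf_if_right_open: "(\<lambda>z. Inf (S z)) \<in> borel_measurable N"
proof -
  note [measurable] = pred_mem
  have less_iff: "(\<exists>s\<in>S z. s < a) \<longleftrightarrow> (\<exists>q::rat. real_of_rat q < a \<and> real_of_rat q \<in> S z)" for z a
    using ex_rat_mem_less right_open by blast
  have "S z = {} \<longleftrightarrow> \<not> (\<exists>q::rat. real_of_rat q \<in> S z)" for z
    using less_iff[of z] by (metis empty_iff equals0I less_add_one)
  then show [measurable]: "Measurable.pred N (\<lambda>z. S z = {})"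
    by (simp only:) measurable
  have "Inf (S z) < a \<longleftrightarrow>
      (S z = {} \<and> Inf ({} :: real set) < a) \<or> (\<exists>q::rat. real_of_rat q < a \<and> real_of_rat q \<in> S z)" for z a
    using less_iff[of z a] cInf_less_iff[OF _ bdd, of z a] by (cases "S z = {}") auto
  then show "(\<lambda>z. Inf (S z)) \<in> borel_measurable N"
    unfolding borel_measurable_iff_less by (simp only:) measurable
qed

section \<open>Maximising affine families with a tie-break\<close>

definition argmax_set :: "('i \<Rightarrow> 'a::linorder) \<Rightarrow> 'i set \<Rightarrow> 'i set" where
  "argmax_set f K = {k \<in> K. \<forall>j\<in>K. f j \<le> f k}"

lemma argmax_set_subset: "argmax_set f K \<subseteq> K"
  unfolding argmax_set_def by auto

lemma argmax_set_eq_Max: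
  assumes "finite K" "K \<noteq> {}"
  shows "argmax_set f K = {k \<in> K. f k = Max (f ` K)}"
  unfolding argmax_set_def using assms by (auto intro: antisym Max_eqI[symmetric])

lemma argmax_set_nonempty:
  assumes "finite K" "K \<noteq> {}"
  shows "argmax_set f K \<noteq> {}"
proof -
  have "Max (f ` K) \<in> f ` K"
    using assms by simp
  then obtain k where "k \<in> K" "f k = Max (f ` K)"
    by auto
  then show ?thesis using assms by (auto simp: argmax_set_eq_Max)
qed

lemma eventually_affine_nonneg_at_right:
  fixes c s t0 :: real
  shows "\<forall>\<^sub>F t in at_right t0. 0 \<le> c + (t - t0) * s \<longleftrightarrow> 0 < c \<or> c = 0 \<and> 0 \<le> s"
proof -
  have lim: "((\<lambda>t. c + (t - t0) * s) \<longlongrightarrow> c) (at_right t0)"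
    by (auto intro!: tendsto_eq_intros tendsto_ident_at)
  consider "0 < c" | "c < 0" | "c = 0" by linarith
  then show ?thesis
  proof cases
    case 1
    then show ?thesis using order_tendstoD(1)[OF lim 1] by (auto elim: eventually_mono)
  next
    case 2
    then show ?thesis using order_tendstoD(2)[OF lim 2] by (auto elim: eventually_mono)
  next
    case 3
    then show ?thesis by (auto simp: eventually_at_right_field zero_le_mult_iff intro: exI[of _ "t0 + 1"])
  qed
qed

lemma argmax_set_lexicographic:
  fixes f g h :: "'i \<Rightarrow> 'a::linorder"
  assumes cmp: "\<And>j k. j \<in> K \<Longrightarrow> k \<in> K \<Longrightarrow> f j \<le> f k \<longleftrightarrow> g j < g k \<or> g j = g k \<and> h j \<le> h k"
  shows "argmax_set f K = argmax_set h (argmax_set g K)"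
proof (intro set_eqI iffI)
  fix k
  assume "k \<in> argmax_set f K"
  then have "k \<in> K" "\<forall>j\<in>K. g j < g k \<or> g j = g k \<and> h j \<le> h k"
    using cmp by (auto simp: argmax_set_def)
  then show "k \<in> argmax_set h (argmax_set g K)"
    unfolding argmax_set_def by fastforce
next
  fix k
  assume k: "k \<in> argmax_set h (argmax_set g K)"
  have "f j \<le> f k" if "j \<in> K" for j
  proof (cases "g j < g k")
    case False
    with k \<open>j \<in> K\<close> have "g j = g k" "j \<in> argmax_set g K"
      unfolding argmax_set_def by force+
    with k \<open>j \<in> K\<close> cmp show ?thesis
      unfolding argmax_set_def by auto
  qed (use k \<open>j \<in> K\<close> cmp in \<open>auto simp: argmax_set_def\<close>)
  with k show "k \<in> argmax_set f K"
    unfolding argmax_set_def by auto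
qed

lemma eventually_argmax_set_affine_at_right:
  fixes a b :: "'i \<Rightarrow> real"
  assumes "finite K"
  shows "\<forall>\<^sub>F t in at_right t0.
    argmax_set (\<lambda>k. a k + t * b k) K = argmax_set b (argmax_set (\<lambda>k. a k + t0 * b k) K)"
proof -
  let ?L = "\<lambda>t k. a k + t * b k"
  have "\<forall>\<^sub>F t in at_right t0.
      ?L t j \<le> ?L t k \<longleftrightarrow> ?L t0 j < ?L t0 k \<or> ?L t0 j = ?L t0 k \<and> b j \<le> b k" for j k
    using eventually_affine_nonneg_at_right[of "?L t0 k - ?L t0 j" t0 "b k - b j"]
    by (auto elim!: eventually_mono simp: algebra_simps)
  then have "\<forall>\<^sub>F t in at_right t0. \<forall>j\<in>K. \<forall>k\<in>K.
      ?L t j \<le> ?L t k \<longleftrightarrow> ?L t0 j < ?L t0 k \<or> ?L t0 j = ?L t0 k \<and> b j \<le> b k"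
    using assms by (intro eventually_ball_finite ballI)
  then show ?thesis
    by (rule eventually_mono) (rule argmax_set_lexicographic, blast)
qed

definition lex_argmin :: "('i::linorder \<Rightarrow> 'a::linorder) \<Rightarrow> 'i set \<Rightarrow> 'i" where
  "lex_argmin f A = Min {k \<in> A. f k = Min (f ` A)}"

lemma lex_argmin_eq_iff:
  assumes "finite A" "A \<noteq> {}"
  shows "lex_argmin f A = k \<longleftrightarrow> k \<in> A \<and> (\<forall>j\<in>A. f k < f j \<or> f k = f j \<and> k \<le> j)"
proof -
  define m where "m = Min (f ` A)"
  define B where "B = {k \<in> A. f k = m}"
  have m_le: "j \<in> A \<Longrightarrow> m \<le> f j" for j
    unfolding m_def using assms by simp
  have "m \<in> f ` A"
    unfolding m_def using assms by simp
  then obtain j0 where "j0 \<in> A" "f j0 = m"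
    by auto
  then have "finite B" "B \<noteq> {}"
    unfolding B_def using assms by auto
  have lex_argmin_eq: "lex_argmin f A = Min B"
    unfolding lex_argmin_def B_def m_def ..
  show ?thesis
  proof
    assume "lex_argmin f A = k"
    then have "k \<in> B" "\<forall>j\<in>B. k \<le> j"
      using Min_in Min_le \<open>finite B\<close> \<open>B \<noteq> {}\<close> by (auto simp: lex_argmin_eq)
    then show "k \<in> A \<and> (\<forall>j\<in>A. f k < f j \<or> f k = f j \<and> k \<le> j)"
      using m_le unfolding B_def by force
  next
    assume k: "k \<in> A \<and> (\<forall>j\<in>A. f k < f j \<or> f k = f j \<and> k \<le> j)"
    then have "f k = m"
      using \<open>j0 \<in> A\<close> \<open>f j0 = m\<close> m_le by force
    then show "lex_argmin f A = k"
      unfolding lex_argmin_eq using k \<open>finite B\<close> by (auto intro!: Min_eqI simp: B_def)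
  qed
qed

lemma lex_argmin_in: "finite A \<Longrightarrow> A \<noteq> {} \<Longrightarrow> lex_argmin f A \<in> A"
  using lex_argmin_eq_iff by blast

lemma lex_argmin_restrict:
  assumes "finite A" "A' \<subseteq> A" "A' \<noteq> {}"
    and less: "\<And>k k'. k \<in> A - A' \<Longrightarrow> k' \<in> A' \<Longrightarrow> f k' < f k"
  shows "lex_argmin f A = lex_argmin f A'"
proof -
  let ?k = "lex_argmin f A'"
  have "finite A'"
    using assms finite_subset by blast
  then have "?k \<in> A' \<and> (\<forall>j\<in>A'. f ?k < f j \<or> f ?k = f j \<and> ?k \<le> j)"
    using lex_argmin_eq_iff[OF _ \<open>A' \<noteq> {}\<close>] by blast
  then have "?k \<in> A \<and> (\<forall>j\<in>A. f ?k < f j \<or> f ?k = f j \<and> ?k \<le> j)"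
    using assms(2) less by blast
  then show ?thesis
    using lex_argmin_eq_iff[OF assms(1)] assms(2,3) by blast
qed

lemma not_in_nth_lex_argmin_iff:
  assumes "finite A" "A \<noteq> {}" "A \<subseteq> K"
  shows "y \<notin> xs ! lex_argmin f A \<longleftrightarrow>
    (\<exists>k\<in>K. k \<in> A \<and> (\<forall>j\<in>K. j \<in> A \<longrightarrow> f k < f j \<or> f k = f j \<and> k \<le> j) \<and> y \<notin> xs ! k)"
proof -
  have "lex_argmin f A \<in> K"
    using lex_argmin_in[OF assms(1,2)] assms(3) by blast
  then have "y \<notin> xs ! lex_argmin f A \<longleftrightarrow> (\<exists>k\<in>K. lex_argmin f A = k \<and> y \<notin> xs ! k)"
    by auto
  also have "\<dots> \<longleftrightarrow> (\<exists>k\<in>K. k \<in> A \<and> (\<forall>j\<in>K. j \<in> A \<longrightarrow> f k < f j \<or> f k = f j \<and> k \<le> j) \<and> y \<notin> xs ! k)"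
    unfolding lex_argmin_eq_iff[OF assms(1,2)] using assms(3) by blast
  finally show ?thesis .
qed

section \<open>The estimated-probability rule\<close>

locale selection_rule =
  fixes Is :: "'y set list" and w :: "'y set \<Rightarrow> real" and p :: "'y set \<Rightarrow> 'x \<Rightarrow> real"
    and alpha :: real
  assumes Is_nonempty: "Is \<noteq> []"
    and weight_pos: "\<And>C. C \<in> set Is \<Longrightarrow> 0 < w C"
    and estimate_nonneg: "\<And>C x. C \<in> set Is \<Longrightarrow> 0 \<le> p C x"
    and alpha_lt_1: "alpha < 1"
begin

definition selects :: "real \<Rightarrow> 'x \<Rightarrow> bool" where
  "selects mu x \<longleftrightarrow> (\<exists>C\<in>set Is. 0 < lhat w p alpha x C mu)"

lemma Dmu_eq_of_bool_selects: "Dmu Is w p alpha mu x = of_bool (selects mu x)"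
  unfolding Dmu_def selects_def using Is_nonempty by (subst Max_gr_iff) auto

lemma selects_antimono:
  assumes "0 \<le> mu" "mu \<le> mu'" "selects mu' x"
  shows "selects mu x"
proof -
  obtain C where C: "C \<in> set Is" "0 < lhat w p alpha x C mu'"
    using assms(3) unfolding selects_def by blast
  have "0 < lhat w p alpha x C mu"
  proof (cases "1 - alpha \<le> p C x")
    case True
    then have "0 < w C * p C x"
      using weight_pos[OF C(1)] alpha_lt_1 by simp
    with True assms(1) show ?thesis
      unfolding lhat_def by (simp add: add_pos_nonneg)
  next
    case False
    then have "mu' * (p C x - (1 - alpha)) \<le> mu * (p C x - (1 - alpha))"
      using assms(2) by (intro mult_right_mono_neg) auto
    with C(2) show ?thesis
      unfolding lhat_def by linarith
  qed
  with C(1) show ?thesis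
    unfolding selects_def by blast
qed

lemma eventually_selects_at_right:
  assumes "0 \<le> mu"
  shows "\<forall>\<^sub>F t in at_right mu. selects t x \<longleftrightarrow> selects mu x"
proof (cases "selects mu x")
  case True
  then obtain C where C: "C \<in> set Is" "0 < lhat w p alpha x C mu"
    unfolding selects_def by blast
  have "((\<lambda>t. lhat w p alpha x C t) \<longlongrightarrow> lhat w p alpha x C mu) (at_right mu)"
    unfolding lhat_def by (auto intro!: tendsto_eq_intros tendsto_ident_at)
  then have "\<forall>\<^sub>F t in at_right mu. 0 < lhat w p alpha x C t"
    using C(2) by (rule order_tendstoD)
  then show ?thesis
    by (rule eventually_mono) (use C(1) True in \<open>auto simp: selects_def\<close>)
next
  case False
  then have "\<not> selects t x" if "mu < t" for t
    using selects_antimono[OF assms, of t x] that by auto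
  with False show ?thesis
    by (auto simp: eventually_at_right_field intro!: exI[of _ "mu + 1"])
qed

lemma weight_less_if_lhat_eq:
  assumes "C \<in> set Is" "0 \<le> mu" "p C x < p C' x"
    and "lhat w p alpha x C mu = lhat w p alpha x C' mu"
  shows "w C' < w C"
proof -
  have "p C' x * (w C' + mu) = p C x * (w C + mu)"
    using assms(4) unfolding lhat_def by (simp add: algebra_simps)
  also have "\<dots> < p C' x * (w C + mu)"
    using assms(2,3) weight_pos[OF assms(1)] by (intro mult_strict_right_mono) auto
  finally show ?thesis
    using assms(3) estimate_nonneg[OF assms(1), of x] by (simp add: mult_less_cancel_left)
qed

lemma Cmu_eq_nth_lex_argmin:
  "Cmu Is w p alpha mu x =
    Is ! lex_argmin (\<lambda>k. w (Is ! k)) (argmax_set (\<lambda>k. lhat w p alpha x (Is ! k) mu) {..<length Is})"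
proof -
  have "{..<length Is} \<noteq> {}"
    using Is_nonempty by (simp add: lessThan_empty_iff)
  then show ?thesis
    unfolding Cmu_def Let_def lex_argmin_def by (simp add: argmax_set_eq_Max)
qed

lemma eventually_Cmu_at_right:
  assumes "0 \<le> mu"
  shows "\<forall>\<^sub>F t in at_right mu. Cmu Is w p alpha t x = Cmu Is w p alpha mu x"
proof -
  let ?K = "{..<length Is}" and ?W = "\<lambda>k. w (Is ! k)"
  define a where "a k = w (Is ! k) * p (Is ! k) x" for k
  define b where "b k = p (Is ! k) x - (1 - alpha)" for k
  have lhat_eq: "lhat w p alpha x (Is ! k) t = a k + t * b k" for k t
    unfolding lhat_def a_def b_def ..
  define A0 where "A0 = argmax_set (\<lambda>k. a k + mu * b k) ?K"
  define A' where "A' = argmax_set b A0"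
  have "?K \<noteq> {}"
    using Is_nonempty by (simp add: lessThan_empty_iff)
  then have "finite A0" "A0 \<noteq> {}"
    unfolding A0_def using argmax_set_nonempty[of ?K] finite_subset[OF argmax_set_subset] by auto
  then have "A' \<subseteq> A0" "A' \<noteq> {}"
    unfolding A'_def by (auto simp: argmax_set_subset argmax_set_nonempty)
  have lighter: "?W k' < ?W k" if k: "k \<in> A0 - A'" and k': "k' \<in> A'" for k k'
  proof (rule weight_less_if_lhat_eq)
    have "k < length Is" "k' < length Is"
      using k k' \<open>A' \<subseteq> A0\<close> unfolding A0_def argmax_set_def by auto
    then show "Is ! k \<in> set Is"
      by simp
    have "b k < b k'"
      using k k' unfolding A'_def argmax_set_def by force
    then show "p (Is ! k) x < p (Is ! k') x"
      unfolding b_def by simp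
    show "lhat w p alpha x (Is ! k) mu = lhat w p alpha x (Is ! k') mu"
      using k k' \<open>A' \<subseteq> A0\<close> unfolding A0_def argmax_set_def lhat_eq by (force intro: order.antisym)
  qed (rule assms)
  have "lex_argmin ?W A0 = lex_argmin ?W A'"
    using \<open>finite A0\<close> \<open>A' \<subseteq> A0\<close> \<open>A' \<noteq> {}\<close> lighter by (rule lex_argmin_restrict)
  moreover have "\<forall>\<^sub>F t in at_right mu. argmax_set (\<lambda>k. a k + t * b k) ?K = A'"
    unfolding A'_def A0_def by (rule eventually_argmax_set_affine_at_right) simp
  ultimately show ?thesis
    by (auto simp: Cmu_eq_nth_lex_argmin lhat_eq A0_def elim!: eventually_mono)
qed

lemma measurable_selects_Cmu:
  fixes M :: "('x \<times> 'y) measure"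
  assumes estimate_measurable: "\<And>C. C \<in> set Is \<Longrightarrow> (\<lambda>z. p C (fst z)) \<in> borel_measurable M"
    and label_measurable: "\<And>C. C \<in> set Is \<Longrightarrow> {z \<in> space M. snd z \<in> C} \<in> sets M"
  shows "Measurable.pred (borel \<Otimes>\<^sub>M M) (\<lambda>(mu, z). selects mu (fst z))"
    and "Measurable.pred (borel \<Otimes>\<^sub>M M) (\<lambda>(mu, z). snd z \<notin> Cmu Is w p alpha mu (fst z))"
proof -
  let ?N = "borel \<Otimes>\<^sub>M M" and ?K = "{..<length Is}"
  let ?A = "\<lambda>mu x. argmax_set (\<lambda>k. lhat w p alpha x (Is ! k) mu) ?K"
  have [measurable]: "(\<lambda>z. p (Is ! k) (fst z)) \<in> borel_measurable M"
    "Measurable.pred M (\<lambda>z. snd z \<in> Is ! k)" if "k \<in> ?K" for k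
    using estimate_measurable label_measurable that by (simp_all add: pred_def)
  have "selects mu x \<longleftrightarrow> (\<exists>k\<in>?K. 0 < lhat w p alpha x (Is ! k) mu)" for mu x
    unfolding selects_def by (auto simp: in_set_conv_nth intro: bexI[OF _ nth_mem])
  then show "Measurable.pred ?N (\<lambda>(mu, z). selects mu (fst z))"
    unfolding lhat_def by (simp only:) measurable
  have [measurable]: "Measurable.pred ?N (\<lambda>(mu, z). k \<in> ?A mu (fst z))" for k
    unfolding argmax_set_def lhat_def by measurable
  have "?K \<noteq> {}"
    using Is_nonempty by (simp add: lessThan_empty_iff)
  then have "finite (?A mu x)" "?A mu x \<noteq> {}" for mu x
    using argmax_set_nonempty[of ?K] finite_subset[OF argmax_set_subset] by auto
  note Cmu_iff = not_in_nth_lex_argmin_iff[OF this argmax_set_subset]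
  show "Measurable.pred ?N (\<lambda>(mu, z). snd z \<notin> Cmu Is w p alpha mu (fst z))"
    unfolding Cmu_eq_nth_lex_argmin Cmu_iff by measurable
qed

end

section \<open>Conformal control of the false discovery rate\<close>

lemma nn_integral_PiM_reindex:
  assumes "prob_space M" "bij_betw \<pi> I I" "f \<in> borel_measurable (PiM I (\<lambda>_. M))"
  shows "(\<integral>\<^sup>+z. f (\<lambda>k\<in>I. z (\<pi> k)) \<partial>PiM I (\<lambda>_. M)) = (\<integral>\<^sup>+z. f z \<partial>PiM I (\<lambda>_. M))"
proof -
  let ?P = "PiM I (\<lambda>_. M)"
  have reindex: "(\<lambda>z. \<lambda>k\<in>I. z (\<pi> k)) \<in> ?P \<rightarrow>\<^sub>M ?P"
    using bij_betwE[OF assms(2)]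
    by (auto intro!: measurable_restrict measurable_component_singleton)
  have "distr ?P ?P (\<lambda>z. \<lambda>k\<in>I. z (\<pi> k)) = ?P"
    using distr_PiM_reindex[of I "\<lambda>_. M" \<pi> I] assms(1,2)
    by (simp add: bij_betw_imp_inj_on bij_betw_imp_funcset)
  then show ?thesis
    using nn_integral_distr[OF reindex] assms(3) by simp
qed

text \<open>
  For a data point x = (X, Y), false_sel mu x and sel mu x stand for the indicators
  1{Y not in C^mu(X)} D^mu(X) and D^mu(X) of the paper.
\<close>

locale conformal_selection =
  fixes M :: "'a measure" and alpha :: real and n m :: nat
    and false_sel sel :: "real \<Rightarrow> 'a \<Rightarrow> bool"
  assumes prob_space_M: "prob_space M"
    and alpha_nonneg: "0 \<le> alpha"
    and m_pos: "0 < m"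
    and false_sel_imp_sel: "\<And>mu x. false_sel mu x \<Longrightarrow> sel mu x"
    and false_sel_antimono: "\<And>mu mu' x. 0 \<le> mu \<Longrightarrow> mu \<le> mu' \<Longrightarrow> false_sel mu' x \<Longrightarrow> false_sel mu x"
    and eventually_false_sel_at_right:
      "\<And>mu x. 0 \<le> mu \<Longrightarrow> \<forall>\<^sub>F t in at_right mu. false_sel t x \<longleftrightarrow> false_sel mu x"
    and eventually_sel_at_right: "\<And>mu x. 0 \<le> mu \<Longrightarrow> \<forall>\<^sub>F t in at_right mu. sel t x \<longleftrightarrow> sel mu x"
    and measurable_false_sel: "Measurable.pred (borel \<Otimes>\<^sub>M M) (\<lambda>(mu, x). false_sel mu x)"
    and measurable_sel: "Measurable.pred (borel \<Otimes>\<^sub>M M) (\<lambda>(mu, x). sel mu x)"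
begin

abbreviation calib :: "nat set" where "calib \<equiv> {..<n}"
abbreviation test :: "nat set" where "test \<equiv> {n..<n + m}"
abbreviation sample_space :: "(nat \<Rightarrow> 'a) measure" where "sample_space \<equiv> PiM {..<n + m} (\<lambda>_. M)"

definition tally :: "(real \<Rightarrow> 'a \<Rightarrow> bool) \<Rightarrow> (nat \<Rightarrow> 'a) \<Rightarrow> nat set \<Rightarrow> real \<Rightarrow> real" where
  "tally P z A mu = (\<Sum>i\<in>A. of_bool (P mu (z i)))"

definition calibrated :: "(nat \<Rightarrow> 'a) \<Rightarrow> real \<Rightarrow> bool" where
  "calibrated z mu \<longleftrightarrow> 0 \<le> mu \<and>
     real m * (tally false_sel z calib mu + 1) \<le> alpha * real (n + 1) * max 1 (tally sel z test mu)"

definition mu_hat :: "(nat \<Rightarrow> 'a) \<Rightarrow> real" where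
  "mu_hat z = Inf (Collect (calibrated z))"

definition fdp :: "(nat \<Rightarrow> 'a) \<Rightarrow> real" where
  "fdp z = (if Collect (calibrated z) = {} then 0
     else tally false_sel z test (mu_hat z) / max 1 (tally sel z test (mu_hat z)))"

text \<open>
  The calibration inequality with test point j counted as a calibration point. It is invariant under
  permutations of insert j calib, which is where exchangeability enters.
\<close>

definition oracle_calibrated :: "(nat \<Rightarrow> 'a) \<Rightarrow> nat \<Rightarrow> real \<Rightarrow> bool" where
  "oracle_calibrated z j mu \<longleftrightarrow> 0 \<le> mu \<and>
     real m * tally false_sel z (insert j calib) mu \<le> alpha * real (n + 1) * (1 + tally sel z (test - {j}) mu)"

definition oracle_mu :: "(nat \<Rightarrow> 'a) \<Rightarrow> nat \<Rightarrow> real" where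
  "oracle_mu z j = Inf (Collect (oracle_calibrated z j))"

definition oracle_share :: "(nat \<Rightarrow> 'a) \<Rightarrow> nat \<Rightarrow> nat \<Rightarrow> real" where
  "oracle_share z j i = (if Collect (oracle_calibrated z j) = {} then 0
     else of_bool (false_sel (oracle_mu z j) (z i)) / tally false_sel z (insert j calib) (oracle_mu z j))"

lemma fdp_eq:
  "Collect (calibrated z) \<noteq> {} \<Longrightarrow>
    fdp z = tally false_sel z test (mu_hat z) / max 1 (tally sel z test (mu_hat z))"
  unfolding fdp_def by (rule if_not_P)

lemma tally_nonneg: "0 \<le> tally P z A mu"
  unfolding tally_def by (simp add: sum_nonneg)

lemma tally_insert: "finite A \<Longrightarrow> j \<notin> A \<Longrightarrow> tally P z (insert j A) mu = of_bool (P mu (z j)) + tally P z A mu"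
  unfolding tally_def by simp

lemma tally_remove: "finite A \<Longrightarrow> j \<in> A \<Longrightarrow> tally P z A mu = of_bool (P mu (z j)) + tally P z (A - {j}) mu"
  unfolding tally_def by (rule sum.remove)

lemma eventually_tally_at_right:
  assumes "finite A" "\<And>x. \<forall>\<^sub>F t in at_right mu. P t x \<longleftrightarrow> P mu x"
  shows "\<forall>\<^sub>F t in at_right mu. tally P z A t = tally P z A mu"
proof -
  have "\<forall>\<^sub>F t in at_right mu. \<forall>i\<in>A. P t (z i) \<longleftrightarrow> P mu (z i)"
    using assms by (intro eventually_ball_finite) auto
  then show ?thesis
    unfolding tally_def by eventually_elim simp
qed

lemma eventually_tallies_at_right:
  assumes "0 \<le> mu" "finite A" "finite B"
  shows "\<forall>\<^sub>F t in at_right mu. 0 \<le> t \<and> tally false_sel z A t = tally false_sel z A mu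
    \<and> tally sel z B t = tally sel z B mu"
proof -
  have "\<forall>\<^sub>F t in at_right mu. tally false_sel z A t = tally false_sel z A mu"
    using assms by (intro eventually_tally_at_right eventually_false_sel_at_right)
  moreover have "\<forall>\<^sub>F t in at_right mu. tally sel z B t = tally sel z B mu"
    using assms by (intro eventually_tally_at_right eventually_sel_at_right)
  moreover have "\<forall>\<^sub>F t in at_right mu. mu < t"
    by (rule eventually_at_right_less)
  ultimately show ?thesis
    by eventually_elim (use assms(1) in auto)
qed

lemma eventually_calibrated_at_right:
  assumes "0 \<le> mu"
  shows "\<forall>\<^sub>F t in at_right mu. calibrated z t \<longleftrightarrow> calibrated z mu"
  using eventually_tallies_at_right[of mu calib test z, OF assms finite_lessThan finite_atLeastLessThan]
  by eventually_elim (use assms in \<open>auto simp: calibrated_def\<close>)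

lemma eventually_oracle_calibrated_at_right:
  assumes "0 \<le> mu"
  shows "\<forall>\<^sub>F t in at_right mu. oracle_calibrated z j t \<longleftrightarrow> oracle_calibrated z j mu"
proof -
  have "finite (insert j calib)" "finite (test - {j})"
    by simp_all
  from eventually_tallies_at_right[OF assms this, of z] show ?thesis
    by eventually_elim (use assms in \<open>auto simp: oracle_calibrated_def\<close>)
qed

lemma calibrated_mu_hat:
  assumes "Collect (calibrated z) \<noteq> {}"
  shows "calibrated z (mu_hat z)"
proof -
  have "bdd_below (Collect (calibrated z))"
    by (rule bdd_belowI[of _ 0]) (simp add: calibrated_def)
  have "0 \<le> mu_hat z"
    unfolding mu_hat_def using assms by (rule cInf_greatest) (simp add: calibrated_def)
  then show ?thesis
    using Inf_mem_of_eventually_at_right[OF assms \<open>bdd_below _\<close>] eventually_calibrated_at_right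
    unfolding mu_hat_def by simp
qed

lemma calibrated_imp_oracle_calibrated:
  assumes "j \<in> test" "calibrated z mu"
  shows "oracle_calibrated z j mu"
proof -
  have "tally false_sel z (insert j calib) mu \<le> tally false_sel z calib mu + 1"
    using assms(1) by (simp add: tally_insert)
  moreover have "max 1 (tally sel z test mu) \<le> 1 + tally sel z (test - {j}) mu"
    using assms(1) tally_nonneg[of sel z "test - {j}" mu] by (simp add: tally_remove[of test j])
  ultimately have "real m * tally false_sel z (insert j calib) mu \<le> real m * (tally false_sel z calib mu + 1)"
    and "alpha * real (n + 1) * max 1 (tally sel z test mu) \<le> alpha * real (n + 1) * (1 + tally sel z (test - {j}) mu)"
    using alpha_nonneg by (simp_all add: mult_left_mono)
  with assms(2) show ?thesis
    unfolding calibrated_def oracle_calibrated_def by linarith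
qed

lemma oracle_mu_eq_mu_hat:
  assumes j: "j \<in> test" and "Collect (calibrated z) \<noteq> {}" and false_j: "false_sel (mu_hat z) (z j)"
  shows "Collect (oracle_calibrated z j) \<noteq> {}" and "oracle_mu z j = mu_hat z"
proof -
  have calibrated: "calibrated z (mu_hat z)"
    using assms(2) by (rule calibrated_mu_hat)
  then show "Collect (oracle_calibrated z j) \<noteq> {}"
    using calibrated_imp_oracle_calibrated[OF j] by blast
  have "mu_hat z \<le> mu" if "oracle_calibrated z j mu" for mu
  proof (rule ccontr)
    assume "\<not> mu_hat z \<le> mu"
    moreover have "0 \<le> mu"
      using that unfolding oracle_calibrated_def by simp
    ultimately have "false_sel mu (z j)"
      using false_sel_antimono[OF _ _ false_j] by simp
    then have "tally sel z test mu = 1 + tally sel z (test - {j}) mu"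
      and "tally false_sel z (insert j calib) mu = tally false_sel z calib mu + 1"
      using j false_sel_imp_sel by (simp_all add: tally_remove[of test j] tally_insert)
    then have "calibrated z mu"
      using that tally_nonneg[of sel z "test - {j}" mu]
      unfolding calibrated_def oracle_calibrated_def by simp
    then have "mu_hat z \<le> mu"
      unfolding mu_hat_def by (intro cInf_lower bdd_belowI[of _ 0]) (auto simp: calibrated_def)
    with \<open>\<not> mu_hat z \<le> mu\<close> show False ..
  qed
  then show "oracle_mu z j = mu_hat z"
    unfolding oracle_mu_def using calibrated_imp_oracle_calibrated[OF j calibrated]
    by (intro cInf_eq_minimum) auto
qed

lemma oracle_share_eq:
  "Collect (oracle_calibrated z j) \<noteq> {} \<Longrightarrow>
    oracle_share z j i = of_bool (false_sel (oracle_mu z j) (z i)) / tally false_sel z (insert j calib) (oracle_mu z j)"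
  unfolding oracle_share_def by (rule if_not_P)

lemma oracle_share_nonneg: "0 \<le> oracle_share z j i"
  unfolding oracle_share_def by (simp add: tally_nonneg)

lemma fdp_le_sum_oracle_share:
  "fdp z \<le> (\<Sum>j\<in>test. alpha / real m * (real (n + 1) * oracle_share z j j))"
proof (cases "Collect (calibrated z) = {}")
  case True
  then show ?thesis
    unfolding fdp_def using alpha_nonneg oracle_share_nonneg by (simp add: sum_nonneg)
next
  case False
  define u where "u = mu_hat z"
  define D where "D = max 1 (tally sel z test u)"
  have "1 \<le> D"
    unfolding D_def by simp
  have calibrated: "real m * (tally false_sel z calib u + 1) \<le> alpha * real (n + 1) * D"
    using calibrated_mu_hat[OF False] unfolding calibrated_def u_def D_def by simp
  have "of_bool (false_sel u (z j)) / D \<le> alpha / real m * (real (n + 1) * oracle_share z j j)"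
    if j: "j \<in> test" for j
  proof (cases "false_sel u (z j)")
    case True
    then have "oracle_share z j j = 1 / (tally false_sel z calib u + 1)"
      using oracle_mu_eq_mu_hat[OF j False] j
      by (simp add: oracle_share_eq tally_insert u_def)
    have "real m * (tally false_sel z calib u + 1) / D \<le> alpha * real (n + 1)"
      using calibrated \<open>1 \<le> D\<close> by (simp add: pos_divide_le_eq)
    then have "1 / D \<le> alpha * real (n + 1) / (real m * (tally false_sel z calib u + 1))"
      using m_pos tally_nonneg[of false_sel z calib u] by (simp add: pos_le_divide_eq mult.commute)
    with True \<open>oracle_share z j j = _\<close> show ?thesis
      by simp
  qed (use alpha_nonneg oracle_share_nonneg in simp)
  then have "(\<Sum>j\<in>test. of_bool (false_sel u (z j)) / D)
      \<le> (\<Sum>j\<in>test. alpha / real m * (real (n + 1) * oracle_share z j j))"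
    by (rule sum_mono)
  moreover have "fdp z = (\<Sum>j\<in>test. of_bool (false_sel u (z j)) / D)"
    unfolding fdp_eq[OF False] tally_def u_def D_def by (rule sum_divide_distrib)
  ultimately show ?thesis
    by simp
qed

lemma sum_oracle_share_le_1: "(\<Sum>i\<in>insert j calib. oracle_share z j i) \<le> 1"
proof (cases "Collect (oracle_calibrated z j) = {}")
  case False
  define T where "T = tally false_sel z (insert j calib) (oracle_mu z j)"
  have "(\<Sum>i\<in>insert j calib. oracle_share z j i) = T / T"
    unfolding oracle_share_eq[OF False] T_def tally_def by (rule sum_divide_distrib[symmetric])
  then show ?thesis
    by simp
qed (simp add: oracle_share_def)

lemma pred_sample_component:
  assumes "Measurable.pred (borel \<Otimes>\<^sub>M M) (\<lambda>(mu, x). P mu x)"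
    and "f \<in> borel_measurable sample_space" "i < n + m"
  shows "Measurable.pred sample_space (\<lambda>z. P (f z) (z i))"
proof -
  have "(\<lambda>z. (f z, z i)) \<in> sample_space \<rightarrow>\<^sub>M borel \<Otimes>\<^sub>M M"
    using assms(2,3) by (auto intro!: measurable_Pair measurable_component_singleton)
  from measurable_compose[OF this assms(1)] show ?thesis
    by simp
qed

lemma borel_measurable_tally:
  assumes "Measurable.pred (borel \<Otimes>\<^sub>M M) (\<lambda>(mu, x). P mu x)"
    and "f \<in> borel_measurable sample_space" "A \<subseteq> {..<n + m}"
  shows "(\<lambda>z. tally P z A (f z)) \<in> borel_measurable sample_space"
proof -
  have [measurable]: "Measurable.pred sample_space (\<lambda>z. P (f z) (z i))" if "i \<in> A" for i
    using assms that by (intro pred_sample_component) auto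
  show ?thesis
    unfolding tally_def by measurable
qed

lemma
  assumes "j \<in> test"
  shows pred_oracle_calibrated_empty: "Measurable.pred sample_space (\<lambda>z. Collect (oracle_calibrated z j) = {})"
    and borel_measurable_oracle_mu: "(\<lambda>z. oracle_mu z j) \<in> borel_measurable sample_space"
proof -
  have pred_mem: "Measurable.pred sample_space (\<lambda>z. q \<in> Collect (oracle_calibrated z j))" for q
  proof -
    have "(\<lambda>z. tally false_sel z (insert j calib) q) \<in> borel_measurable sample_space"
      "(\<lambda>z. tally sel z (test - {j}) q) \<in> borel_measurable sample_space"
      using assms by (auto intro!: borel_measurable_tally measurable_false_sel measurable_sel)
    then have "Measurable.pred sample_space (\<lambda>z.
        real m * tally false_sel z (insert j calib) q \<le> alpha * real (n + 1) * (1 + tally sel z (test - {j}) q))"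
      unfolding pred_def by (intro borel_measurable_le borel_measurable_times borel_measurable_add borel_measurable_const)
    then show ?thesis
      unfolding mem_Collect_eq oracle_calibrated_def by (cases "0 \<le> q") simp_all
  qed
  have bdd: "bdd_below (Collect (oracle_calibrated z j))" for z
    by (rule bdd_belowI[of _ 0]) (simp add: oracle_calibrated_def)
  have right_open: "\<forall>\<^sub>F t in at_right s. t \<in> Collect (oracle_calibrated z j)"
    if "s \<in> Collect (oracle_calibrated z j)" for z s
    using eventually_oracle_calibrated_at_right[of s z j] that
    by (auto simp: oracle_calibrated_def elim: eventually_mono)
  show "Measurable.pred sample_space (\<lambda>z. Collect (oracle_calibrated z j) = {})"
    using pred_mem bdd right_open by (rule pred_empty_if_right_open)
  show "(\<lambda>z. oracle_mu z j) \<in> borel_measurable sample_space"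
    unfolding oracle_mu_def using pred_mem bdd right_open by (rule borel_measurable_Inf_if_right_open)
qed

lemma borel_measurable_oracle_share:
  assumes "j \<in> test" "i \<in> insert j calib"
  shows "(\<lambda>z. oracle_share z j i) \<in> borel_measurable sample_space"
proof -
  note [measurable] = pred_oracle_calibrated_empty[OF assms(1)] borel_measurable_oracle_mu[OF assms(1)]
  have [measurable]: "(\<lambda>z. tally false_sel z (insert j calib) (oracle_mu z j)) \<in> borel_measurable sample_space"
    "Measurable.pred sample_space (\<lambda>z. false_sel (oracle_mu z j) (z i))"
    using assms
    by (auto intro!: borel_measurable_tally[OF measurable_false_sel borel_measurable_oracle_mu[OF assms(1)]]
        pred_sample_component[OF measurable_false_sel borel_measurable_oracle_mu[OF assms(1)]])
  show ?thesis
    unfolding oracle_share_def by measurable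
qed

lemma oracle_share_transpose:
  assumes j: "j \<in> test" and i: "i \<in> insert j calib"
  shows "oracle_share (\<lambda>k\<in>{..<n + m}. z (Transposition.transpose i j k)) j j = oracle_share z j i"
proof -
  define z' where "z' = (\<lambda>k\<in>{..<n + m}. z (Transposition.transpose i j k))"
  have bij: "bij_betw (Transposition.transpose i j) (insert j calib) (insert j calib)"
    using i by simp
  have "tally P z' (insert j calib) mu = (\<Sum>k\<in>insert j calib. of_bool (P mu (z (Transposition.transpose i j k))))"
    for P mu unfolding tally_def z'_def using j by (intro sum.cong) auto
  also have "\<dots> P mu = tally P z (insert j calib) mu" for P mu
    unfolding tally_def by (rule sum.reindex_bij_betw[OF bij])
  finally have tally_calib: "tally P z' (insert j calib) mu = tally P z (insert j calib) mu" for P mu .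
  moreover have "tally P z' (test - {j}) mu = tally P z (test - {j}) mu" for P mu
    unfolding tally_def z'_def using i by (intro sum.cong) auto
  ultimately have calibrated_eq: "oracle_calibrated z' j = oracle_calibrated z j"
    unfolding oracle_calibrated_def by (intro ext) presburger
  have "z' j = z i"
    unfolding z'_def using j by simp
  then show ?thesis
    unfolding oracle_share_def oracle_mu_def z'_def[symmetric] calibrated_eq tally_calib by (simp only:)
qed

lemma nn_integral_oracle_share_eq:
  assumes "j \<in> test" "i \<in> insert j calib"
  shows "(\<integral>\<^sup>+z. oracle_share z j i \<partial>sample_space) = (\<integral>\<^sup>+z. oracle_share z j j \<partial>sample_space)"
proof -
  have bij: "bij_betw (Transposition.transpose i j) {..<n + m} {..<n + m}"
    using assms by (intro bij_betw_transpose_iff) auto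
  have "(\<lambda>z. ennreal (oracle_share z j j)) \<in> borel_measurable sample_space"
    using borel_measurable_oracle_share[OF assms(1), of j] by simp
  from nn_integral_PiM_reindex[OF prob_space_M bij this] show ?thesis
    by (simp add: oracle_share_transpose[OF assms])
qed

lemma nn_integral_oracle_share_le:
  assumes "j \<in> test"
  shows "ennreal (real (n + 1)) * (\<integral>\<^sup>+z. oracle_share z j j \<partial>sample_space) \<le> 1"
proof -
  have "card (insert j calib) = n + 1"
    using assms by simp
  then have "ennreal (real (n + 1)) * (\<integral>\<^sup>+z. oracle_share z j j \<partial>sample_space)
      = (\<Sum>i\<in>insert j calib. \<integral>\<^sup>+z. oracle_share z j j \<partial>sample_space)"
    by (simp add: ennreal_of_nat_eq_real_of_nat)
  also have "\<dots> = (\<Sum>i\<in>insert j calib. \<integral>\<^sup>+z. oracle_share z j i \<partial>sample_space)"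
    by (rule sum.cong[OF refl], rule nn_integral_oracle_share_eq[OF assms, symmetric])
  also have "\<dots> = (\<integral>\<^sup>+z. (\<Sum>i\<in>insert j calib. ennreal (oracle_share z j i)) \<partial>sample_space)"
    using borel_measurable_oracle_share[OF assms] by (intro nn_integral_sum[symmetric]) simp
  also have "\<dots> \<le> (\<integral>\<^sup>+z. 1 \<partial>sample_space)"
  proof (rule nn_integral_mono)
    fix z
    show "(\<Sum>i\<in>insert j calib. ennreal (oracle_share z j i)) \<le> 1"
      using sum_oracle_share_le_1[of z j] oracle_share_nonneg by (subst sum_ennreal) auto
  qed
  also have "\<dots> = 1"
    using prob_space.emeasure_space_1[OF prob_space_PiM] prob_space_M by simp
  finally show ?thesis .
qed

theorem nn_integral_fdp_le: "(\<integral>\<^sup>+z. fdp z \<partial>sample_space) \<le> ennreal alpha"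
proof -
  let ?c = "ennreal (alpha / real m)" and ?s = "\<lambda>j z. ennreal (real (n + 1)) * ennreal (oracle_share z j j)"
  have [measurable]: "(\<lambda>z. oracle_share z j j) \<in> borel_measurable sample_space" if "j \<in> test" for j
    using borel_measurable_oracle_share[OF that] by simp
  have "(\<integral>\<^sup>+z. fdp z \<partial>sample_space) \<le> (\<integral>\<^sup>+z. (\<Sum>j\<in>test. ?c * ?s j z) \<partial>sample_space)"
  proof (rule nn_integral_mono)
    fix z
    have "ennreal (fdp z) \<le> ennreal (\<Sum>j\<in>test. alpha / real m * (real (n + 1) * oracle_share z j j))"
      by (rule ennreal_leI) (rule fdp_le_sum_oracle_share)
    also have "\<dots> = (\<Sum>j\<in>test. ennreal (alpha / real m * (real (n + 1) * oracle_share z j j)))"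
      using alpha_nonneg oracle_share_nonneg by (intro sum_ennreal[symmetric]) simp
    also have "\<dots> = (\<Sum>j\<in>test. ?c * ?s j z)"
      using alpha_nonneg by (intro sum.cong refl) (simp only: ennreal_mult' of_nat_0_le_iff divide_nonneg_nonneg)
    finally show "ennreal (fdp z) \<le> (\<Sum>j\<in>test. ?c * ?s j z)" .
  qed
  also have "\<dots> = (\<Sum>j\<in>test. ?c * (ennreal (real (n + 1)) * (\<integral>\<^sup>+z. oracle_share z j j \<partial>sample_space)))"
    by (subst nn_integral_sum) (auto simp: nn_integral_cmult)
  also have "\<dots> \<le> (\<Sum>j\<in>test. ?c * 1)"
    by (intro sum_mono mult_left_mono nn_integral_oracle_share_le) auto
  also have "\<dots> = ennreal alpha"
    using m_pos alpha_nonneg by (simp add: ennreal_of_nat_eq_real_of_nat ennreal_mult[symmetric])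
  finally show ?thesis .
qed

end

locale estimated_selection = selection_rule Is w p alpha
  for Is :: "'y set list" and w :: "'y set \<Rightarrow> real" and p :: "'y set \<Rightarrow> 'x \<Rightarrow> real" and alpha :: real +
  fixes M :: "('x \<times> 'y) measure" and n m :: nat
  assumes prob_space_M: "prob_space M"
    and alpha_nonneg: "0 \<le> alpha"
    and m_pos: "0 < m"
    and Cmu_mono: "\<And>x mu1 mu2. 0 \<le> mu1 \<Longrightarrow> mu1 < mu2 \<Longrightarrow> Cmu Is w p alpha mu1 x \<subseteq> Cmu Is w p alpha mu2 x"
    and estimate_measurable: "\<And>C. C \<in> set Is \<Longrightarrow> (\<lambda>z. p C (fst z)) \<in> borel_measurable M"
    and label_measurable: "\<And>C. C \<in> set Is \<Longrightarrow> {z \<in> space M. snd z \<in> C} \<in> sets M"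
begin

sublocale conformal_selection M alpha n m
  "\<lambda>mu z. snd z \<notin> Cmu Is w p alpha mu (fst z) \<and> selects mu (fst z)" "\<lambda>mu z. selects mu (fst z)"
proof (rule conformal_selection.intro)
  show "prob_space M" "0 \<le> alpha" "0 < m"
    using prob_space_M alpha_nonneg m_pos by simp_all
  show "selects mu (fst z)" if "snd z \<notin> Cmu Is w p alpha mu (fst z) \<and> selects mu (fst z)" for mu z
    using that by simp
  show "snd z \<notin> Cmu Is w p alpha mu (fst z) \<and> selects mu (fst z)"
    if "0 \<le> mu" "mu \<le> mu'" "snd z \<notin> Cmu Is w p alpha mu' (fst z) \<and> selects mu' (fst z)" for mu mu' z
    using that Cmu_mono[OF that(1), of mu' "fst z"] selects_antimono[OF that(1,2)]
    by (cases "mu = mu'") auto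
  show "\<forall>\<^sub>F t in at_right mu. (snd z \<notin> Cmu Is w p alpha t (fst z) \<and> selects t (fst z)) \<longleftrightarrow>
      (snd z \<notin> Cmu Is w p alpha mu (fst z) \<and> selects mu (fst z))"
    and "\<forall>\<^sub>F t in at_right mu. selects t (fst z) \<longleftrightarrow> selects mu (fst z)" if "0 \<le> mu" for mu z
    using eventually_Cmu_at_right[OF that, of "fst z"] eventually_selects_at_right[OF that, of "fst z"]
    by (eventually_elim, simp)+
  show "Measurable.pred (borel \<Otimes>\<^sub>M M)
      (\<lambda>(mu, z). snd z \<notin> Cmu Is w p alpha mu (fst z) \<and> selects mu (fst z))"
    and "Measurable.pred (borel \<Otimes>\<^sub>M M) (\<lambda>(mu, z). selects mu (fst z))"
    using measurable_selects_Cmu[OF estimate_measurable label_measurable] by (simp_all add: case_prod_beta)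
qed

lemma fdp_mu_alpha_eq_fdp: "fdp_mu_alpha Is w p alpha n m z = fdp z"
proof -
  have ratio_le_iff: "(1 / real (n + 1) * A) / (1 / real m * D) \<le> alpha \<longleftrightarrow> real m * A \<le> alpha * real (n + 1) * D"
    if "1 \<le> D" for A D
  proof -
    have "(1 / real (n + 1) * A) / (1 / real m * D) = real m * A / (real (n + 1) * D)"
      using m_pos that by (simp add: field_simps)
    moreover have "0 < real (n + 1) * D"
      using that by simp
    ultimately show ?thesis
      by (simp add: pos_divide_le_eq mult_ac)
  qed
  have "calib_ratio Is w p alpha n m z mu \<le> alpha \<longleftrightarrow>
      real m * (tally (\<lambda>mu z. snd z \<notin> Cmu Is w p alpha mu (fst z) \<and> selects mu (fst z)) z calib mu + 1)
        \<le> alpha * real (n + 1) * max 1 (tally (\<lambda>mu z. selects mu (fst z)) z test mu)" for mu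
    unfolding calib_ratio_def tally_def Dmu_eq_of_bool_selects of_bool_conj by (rule ratio_le_iff) simp
  then have mu_set_eq: "mu_set Is w p alpha n m z = Collect (calibrated z)"
    unfolding mu_set_def calibrated_def by auto
  have fdp_at_eq: "fdp_at Is w p alpha n m z mu =
      tally (\<lambda>mu z. snd z \<notin> Cmu Is w p alpha mu (fst z) \<and> selects mu (fst z)) z test mu
        / max 1 (tally (\<lambda>mu z. selects mu (fst z)) z test mu)" for mu
    unfolding fdp_at_def tally_def Dmu_eq_of_bool_selects of_bool_conj ..
  show ?thesis
    unfolding fdp_mu_alpha_def fdp_def mu_hat_def mu_set_eq fdp_at_eq ..
qed

end

theorem theorem2:
  fixes M :: "('x \<times> 'y) measure"
    and Is :: "'y set list" and w :: "'y set \<Rightarrow> real" and B :: real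
    and p :: "'y set \<Rightarrow> 'x \<Rightarrow> real"
    and alpha :: real and n m :: nat
  assumes "prob_space M"
    and "0 < alpha" "alpha < 1"
    and "m \<ge> 1"
    and "Is \<noteq> []" "distinct Is"
    and "\<And>C. C \<in> set Is \<Longrightarrow> 0 < w C \<and> w C < B"
    and "\<And>C x. C \<in> set Is \<Longrightarrow> 0 \<le> p C x \<and> p C x \<le> 1"
    and "\<And>C. C \<in> set Is \<Longrightarrow> (\<lambda>z. p C (fst z)) \<in> borel_measurable M"
    and "\<And>C. C \<in> set Is \<Longrightarrow> {z \<in> space M. snd z \<in> C} \<in> sets M"
    and "\<And>x mu1 mu2. 0 \<le> mu1 \<Longrightarrow> mu1 < mu2 \<Longrightarrow>
           Cmu Is w p alpha mu1 x \<subseteq> Cmu Is w p alpha mu2 x"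
  shows "(\<integral>\<^sup>+ z. ennreal (fdp_mu_alpha Is w p alpha n m z) \<partial>(PiM {..<n+m} (\<lambda>_. M)))
           \<le> ennreal alpha"
proof -
  interpret estimated_selection Is w p alpha M n m
    by (intro estimated_selection.intro selection_rule.intro estimated_selection_axioms.intro)
      (use assms in auto)
  show ?thesis
    using nn_integral_fdp_le by (simp add: fdp_mu_alpha_eq_fdp)
qed

end
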